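(* Let $D=\mathrm{diag}(1,-1,1,-1,\ldots)=(1,-x)$, let $P=\bigl[\binom{i}{j}\bigr]_{i,j\ge 0}=\bigl(\tfrac{1}{1-x},\tfrac{x}{1-x}\bigr)$ be the Pascal matrix, and let $\mathbb{F}^{\rm S}=(1,x(1+x))$ and $\mathbb{L}^{\rm S}=(1+2x,x(1+x))$. Let $C(x)=\frac{1-\sqrt{1-4x}}{2x}$, $M(x)=\frac{1-x-\sqrt{(1-x)^2-4x^2}}{2x^2}$ and $W(x)=\sum_{n\ge0}\binom{2n}{n}x^n$. Then: (a) $D(\mathbb{F}^{\rm S})^{-1}D=(1,xC(x))=P\left(\frac{M(x)-xM(x)-x^2M(x)^2}{1+x},\frac{x+x^2M(x)}{1+x}\right)$; (b) $D(\mathbb{L}^{\rm S})^{-1}D=\left(\frac{1}{1-2xC(x)},xC(x)\right)=(W(x),x)\,P\left(\frac{M(x)-xM(x)-x^2M(x)^2}{1+x},\frac{x+x^2M(x)}{1+x}\right)$; (c) $D(\mathbb{L}^{\rm S})^{-1}D=\left(\frac{1}{1-2xC(x)},x\right)D(\mathbb{F}^{\rm S})^{-1}D=(W(x),x)\,D(\mathbb{F}^{\rm S})^{-1}D=D(\mathbb{F}^{\rm S})^{-1}D\left(\frac{1}{1-2x},x\right)$.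
   Context: All matrices are infinite with rows and columns indexed by $0,1,2,\ldots$. For formal power series $g(x)=g_0+g_1x+\cdots$ and $f(x)=f_1x+f_2x^2+\cdots$, $(g(x),f(x))$ denotes the infinite lower triangular matrix whose $j$-th column ($j=0,1,\ldots$) has generating function $g(x)f(x)^j$; it is a Riordan matrix when $g_0\neq0$ and $f_1\neq0$. Riordan matrices form a group under matrix multiplication, with $(g(x),f(x))(h(x),l(x))=(g(x)h(f(x)),l(f(x)))$ and $(g(x),f(x))^{-1}=(1/g(\bar f(x)),\bar f(x))$, where $\bar f$ is the compositional inverse of $f$. *)

theory Defs
  imports Complex_Main "HOL-Computational_Algebra.Formal_Power_Series"
begin

type_synonym mat = "nat \<Rightarrow> nat \<Rightarrow> real"

definition riordan :: "real fps \<Rightarrow> real fps \<Rightarrow> mat" where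
  "riordan g f i j = fps_nth (g * f ^ j) i"

text \<open>Product of infinite matrices whose left factor is lower triangular
  (all factors occurring below are): entries with k > i vanish.\<close>
definition mmult :: "mat \<Rightarrow> mat \<Rightarrow> mat" where
  "mmult A B i j = (\<Sum>k\<le>i. A i k * B k j)"

definition mat_id :: mat where
  "mat_id i j = (if i = j then 1 else 0)"

definition lower_tri :: "mat \<Rightarrow> bool" where
  "lower_tri A \<longleftrightarrow> (\<forall>i j. i < j \<longrightarrow> A i j = 0)"

text \<open>Matrix inverse of an infinite lower triangular matrix (with nonzero diagonal,
  the inverse exists, is unique and lower triangular).\<close>
definition minv :: "mat \<Rightarrow> mat" where
  "minv A = (THE B. lower_tri B \<and> mmult A B = mat_id)"

text \<open>Formal square root with constant term sqrt(a_0).\<close>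
definition fps_sqrt :: "real fps \<Rightarrow> real fps" where
  "fps_sqrt a = fps_radical (\<lambda>k x. root k x) 2 a"

definition Dmat :: mat where "Dmat = riordan 1 (- fps_X)"
definition Pascal :: mat where "Pascal = riordan (1 / (1 - fps_X)) (fps_X / (1 - fps_X))"
definition FS :: mat where "FS = riordan 1 (fps_X * (1 + fps_X))"
definition LS :: mat where "LS = riordan (1 + 2 * fps_X) (fps_X * (1 + fps_X))"

definition Cfps :: "real fps" where
  "Cfps = (1 - fps_sqrt (1 - 4 * fps_X)) / (2 * fps_X)"
definition Mfps :: "real fps" where
  "Mfps = (1 - fps_X - fps_sqrt ((1 - fps_X)^2 - 4 * fps_X^2)) / (2 * fps_X^2)"
definition Wfps :: "real fps" where
  "Wfps = Abs_fps (\<lambda>n. of_nat ((2*n) choose n))"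

end

theory Submission
  imports Defs
begin

text \<open>Conjugation by \<open>D = (1, -x)\<close> substitutes \<open>-x\<close>, so \<open>D (g, x(1+x))\<^sup>-\<^sup>1 D = (1/g(-u), u)\<close>
  where \<open>u\<close> is the compositional inverse of \<open>x - x\<^sup>2\<close>, namely \<open>u = x C(x)\<close>; this is the first
  identity in (a) and (b), for \<open>g = 1\<close> and \<open>g = 1 + 2x\<close>. The Pascal factorisation holds because
  the substitution \<open>x \<mapsto> x/(1-x)\<close> carries the Motzkin series \<open>M\<close> to \<open>(1-x) C(x)\<^sup>2\<close>, both being
  the unique solution of \<open>y = 1 + p y + p\<^sup>2 y\<^sup>2\<close> for \<open>p = x/(1-x)\<close>. Finally \<open>1 - 2x C(x) = \<surd>(1-4x)\<close> and \<open>W = 1/\<surd>(1-4x)\<close>,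
  after which every remaining identity is a product in the Riordan group.\<close>

unbundle fps_syntax

lemma riordan_lower_tri: "f $ 0 = 0 \<Longrightarrow> lower_tri (riordan g f)"
  unfolding lower_tri_def riordan_def
  by (auto simp: fps_mult_nth startsby_zero_power_prefix intro!: sum.neutral)

lemma riordan_1_X: "riordan 1 fps_X = mat_id"
  by (auto simp: riordan_def mat_id_def fun_eq_iff)

lemma mmult_mat_id_left: "mmult mat_id B = B"
  by (simp add: mmult_def mat_id_def fun_eq_iff if_distrib[of "\<lambda>x. x * _"] cong: if_cong)

lemma mmult_mat_id_right: "lower_tri B \<Longrightarrow> mmult B mat_id = B"
  by (auto simp: mmult_def mat_id_def fun_eq_iff lower_tri_def if_distrib[of "(*) _"] cong: if_cong)

lemma fps_compose_uminus_X_twice: "(a oo -fps_X) oo -fps_X = (a :: 'a :: idom fps)"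
  by (simp add: fps_compose_assoc[symmetric] fps_compose_uminus)

lemma fps_compose_divide_unit:
  fixes a b p :: "'a :: field fps"
  assumes "b $ 0 \<noteq> 0" "p $ 0 = 0"
  shows "(a / b) oo p = (a oo p) / (b oo p)"
  using assms by (simp add: fps_divide_unit fps_compose_mult_distrib fps_inverse_compose)

lemma fps_compose_nth_truncated:
  fixes c f :: "'a :: comm_ring_1 fps"
  assumes "f $ 0 = 0" "n \<le> i"
  shows "(c oo f) $ n = (\<Sum>k\<le>i. c $ k * (f ^ k) $ n)"
  unfolding fps_compose_nth atLeast0AtMost
  using assms by (intro sum.mono_neutral_left) (auto simp: startsby_zero_power_prefix)

lemma mmult_riordan:
  fixes g f h l :: "real fps"
  assumes f0: "f $ 0 = 0"
  shows "mmult (riordan g f) (riordan h l) = riordan (g * (h oo f)) (l oo f)"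
proof (intro ext)
  fix i j
  define c where "c = h * l ^ j"
  have "(h oo f) * (l oo f) ^ j = c oo f"
    by (simp add: c_def fps_compose_mult_distrib[OF f0] fps_compose_power[OF f0])
  then have "riordan (g * (h oo f)) (l oo f) i j = (g * (c oo f)) $ i"
    by (simp add: riordan_def mult.assoc)
  also have "\<dots> = (\<Sum>m\<le>i. \<Sum>k\<le>i. g $ m * (c $ k * (f ^ k) $ (i - m)))"
    by (auto simp: fps_mult_nth atLeast0AtMost fps_compose_nth_truncated[OF f0, where i = i]
        sum_distrib_left intro!: sum.cong)
  also have "\<dots> = (\<Sum>k\<le>i. (g * f ^ k) $ i * c $ k)"
    by (subst sum.swap)
      (simp add: fps_mult_nth atLeast0AtMost sum_distrib_left sum_distrib_right mult_ac)
  also have "\<dots> = mmult (riordan g f) (riordan h l) i j"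
    by (simp add: mmult_def riordan_def c_def)
  finally show "mmult (riordan g f) (riordan h l) i j = riordan (g * (h oo f)) (l oo f) i j"
    by simp
qed

lemma mmult_assoc:
  assumes "lower_tri A"
  shows "mmult (mmult L A) B = mmult L (mmult A B)"
proof (intro ext)
  fix i j
  have "mmult (mmult L A) B i j = (\<Sum>m\<le>i. \<Sum>k\<le>i. L i m * A m k * B k j)"
    by (subst sum.swap) (simp add: mmult_def sum_distrib_right)
  also have "\<dots> = (\<Sum>m\<le>i. \<Sum>k\<le>m. L i m * A m k * B k j)"
    using assms by (intro sum.cong refl sum.mono_neutral_right) (auto simp: lower_tri_def)
  also have "\<dots> = mmult L (mmult A B) i j"
    by (simp add: mmult_def sum_distrib_left mult_ac)
  finally show "mmult (mmult L A) B i j = mmult L (mmult A B) i j" .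
qed

lemma minv_eqI:
  assumes "mmult L A = mat_id" "lower_tri A" "lower_tri L"
    and "lower_tri B" "mmult A B = mat_id"
  shows "minv A = L"
proof -
  have right_inverse_unique: "B' = L" if "lower_tri B'" "mmult A B' = mat_id" for B'
  proof -
    have "B' = mmult (mmult L A) B'" by (simp add: assms(1) mmult_mat_id_left)
    also have "\<dots> = mmult L (mmult A B')" by (rule mmult_assoc[OF assms(2)])
    also have "\<dots> = L" using that assms(3) by (simp add: mmult_mat_id_right)
    finally show ?thesis .
  qed
  with assms(4,5) have "lower_tri L \<and> mmult A L = mat_id" by auto
  then show ?thesis
    unfolding minv_def using right_inverse_unique by (intro the_equality) auto
qed

lemma minv_riordan:
  fixes g f s :: "real fps"
  assumes f0: "f $ 0 = 0" and f1: "f $ 1 \<noteq> 0" and g0: "g $ 0 \<noteq> 0"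
    and s0: "s $ 0 = 0" and fs: "f oo s = fps_X"
  shows "minv (riordan g f) = riordan (inverse (g oo s)) s"
proof -
  define r where "r = fps_inv f"
  have r0: "r $ 0 = 0" by (simp add: r_def fps_inv_def)
  have rf: "r oo f = fps_X" using fps_inv[OF f0 f1] by (simp add: r_def)
  have "inverse (g oo r) oo f = inverse g"
    using f0 g0 r0 by (simp add: fps_inverse_compose fps_compose_assoc[symmetric] rf)
  then have "mmult (riordan g f) (riordan (inverse (g oo r)) r) = mat_id"
    using g0 by (simp add: mmult_riordan[OF f0] rf riordan_1_X inverse_mult_eq_1')
  moreover have "mmult (riordan (inverse (g oo s)) s) (riordan g f) = mat_id"
    using g0 by (simp add: mmult_riordan[OF s0] fs riordan_1_X inverse_mult_eq_1)
  ultimately show ?thesis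
    using f0 s0 r0 by (intro minv_eqI) (simp_all add: riordan_lower_tri)
qed

lemma Dmat_conj_riordan:
  fixes g f :: "real fps"
  assumes f0: "f $ 0 = 0"
  shows "mmult (mmult Dmat (riordan g f)) Dmat = riordan (g oo -fps_X) (- (f oo -fps_X))"
proof -
  have X0: "(-fps_X :: real fps) $ 0 = 0" by simp
  have fX0: "(f oo -fps_X) $ 0 = 0" using f0 by simp
  show ?thesis
    unfolding Dmat_def mmult_riordan[OF X0] mmult_riordan[OF fX0]
    by (simp add: fps_compose_uminus fps_X_fps_compose_startby0[OF fX0])
qed

lemma Dmat_conj_minv_riordan:
  fixes g f u :: "real fps"
  assumes f0: "f $ 0 = 0" and f1: "f $ 1 \<noteq> 0" and g0: "g $ 0 \<noteq> 0" and u0: "u $ 0 = 0"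
    and fu: "- (f oo -fps_X) oo u = fps_X"
  shows "mmult (mmult Dmat (minv (riordan g f))) Dmat
           = riordan (inverse ((g oo -fps_X) oo u)) u"
proof -
  define s where "s = - (u oo -fps_X)"
  have X0: "(-fps_X :: real fps) $ 0 = 0" and v0: "(u oo -fps_X) $ 0 = 0" and s0: "s $ 0 = 0"
    using u0 by (simp_all add: s_def)
  have reflect: "a oo s = ((a oo -fps_X) oo u) oo -fps_X" for a
  proof -
    have "a oo s = a oo (-fps_X oo (u oo -fps_X))"
      by (simp add: s_def fps_compose_uminus fps_X_fps_compose_startby0[OF v0])
    also have "\<dots> = (a oo -fps_X) oo (u oo -fps_X)" by (rule fps_compose_assoc[OF v0 X0])
    also have "\<dots> = ((a oo -fps_X) oo u) oo -fps_X" by (rule fps_compose_assoc[OF X0 u0])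
    finally show ?thesis .
  qed
  have "f oo s = fps_X"
    using arg_cong[OF fu, of uminus] by (simp add: reflect fps_compose_uminus)
  then have "minv (riordan g f) = riordan (inverse (g oo s)) s"
    by (rule minv_riordan[OF f0 f1 g0 s0])
  moreover have "inverse (g oo s) oo -fps_X = inverse ((g oo -fps_X) oo u)"
    using g0 s0 by (simp add: fps_inverse_compose reflect fps_compose_uminus_X_twice)
  ultimately show ?thesis
    using s0 by (simp add: Dmat_conj_riordan s_def fps_compose_uminus fps_compose_uminus_X_twice)
qed

lemma fps_sqrt_nth_0: "fps_sqrt a $ 0 = sqrt (a $ 0)"
  by (simp add: fps_sqrt_def sqrt_def)

lemma fps_sqrt_power2: "a $ 0 > 0 \<Longrightarrow> fps_sqrt a ^ 2 = a"
  using power_radical[of a "\<lambda>k x. root k x" 1] real_root_pow_pos2[of 2 "a $ 0"]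
  by (simp add: fps_sqrt_def numeral_2_eq_2)

lemma fps_quadratic_formula:
  fixes b c S :: "real fps"
  assumes c: "c \<noteq> 0" and bS: "(b + S) $ 0 \<noteq> 0" and S2: "S ^ 2 = b ^ 2 - 4 * c"
  defines "y \<equiv> (b - S) / (2 * c)"
  shows "b - 2 * c * y = S" and "c * y ^ 2 - b * y + 1 = 0"
proof -
  have "inverse (b + S) * (b + S) = 1" using bS by (rule inverse_mult_eq_1)
  then have bS_div: "b - S = 2 * c * (2 * inverse (b + S))" using S2 by algebra
  then have "y = 2 * c * (2 * inverse (b + S)) / (2 * c)" by (simp only: y_def)
  also have "\<dots> = 2 * inverse (b + S)" using c by (intro nonzero_mult_div_cancel_left) simp
  finally have "y = 2 * inverse (b + S)" .
  with bS_div show root: "b - 2 * c * y = S" by algebra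
  have "4 * c * (c * y ^ 2 - b * y + 1) = 0"
    using S2 by (simp add: root[symmetric] algebra_simps power2_eq_square)
  with c show "c * y ^ 2 - b * y + 1 = 0" by simp
qed

lemma Cfps_quadratic:
  shows Cfps_root: "1 - 2 * fps_X * Cfps = fps_sqrt (1 - 4 * fps_X)"
    and Cfps_eq: "Cfps = 1 + fps_X * Cfps ^ 2"
proof -
  have S: "(1 + fps_sqrt (1 - 4 * fps_X)) $ 0 \<noteq> 0"
      "fps_sqrt (1 - 4 * fps_X) ^ 2 = 1 ^ 2 - 4 * fps_X"
    by (simp_all add: fps_sqrt_nth_0 fps_sqrt_power2)
  show "1 - 2 * fps_X * Cfps = fps_sqrt (1 - 4 * fps_X)"
    using fps_quadratic_formula(1)[OF fps_X_neq_zero S, folded Cfps_def] by simp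
  show "Cfps = 1 + fps_X * Cfps ^ 2"
    using fps_quadratic_formula(2)[OF fps_X_neq_zero S, folded Cfps_def]
    by (simp add: algebra_simps)
qed

lemma Mfps_eq: "Mfps = 1 + fps_X * Mfps + fps_X ^ 2 * Mfps ^ 2"
proof -
  have "((1 - fps_X) ^ 2 - 4 * fps_X ^ 2 :: real fps) $ 0 = 1"
    by (simp add: power2_eq_square fps_mult_nth)
  then have S: "(1 - fps_X + fps_sqrt ((1 - fps_X) ^ 2 - 4 * fps_X ^ 2)) $ 0 \<noteq> 0"
      "fps_sqrt ((1 - fps_X) ^ 2 - 4 * fps_X ^ 2) ^ 2 = (1 - fps_X) ^ 2 - 4 * fps_X ^ 2"
    by (simp_all add: fps_sqrt_nth_0 fps_sqrt_power2)
  show ?thesis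
    using fps_quadratic_formula(2)[of "fps_X ^ 2", OF _ S, folded Mfps_def]
    by (simp add: algebra_simps)
qed

lemma central_binomial_Suc: "Suc n * (2 * Suc n choose Suc n) = 2 * (2 * n + 1) * (2 * n choose n)"
proof -
  have "Suc n * (2 * Suc n choose Suc n) = Suc (2 * n + 1) * (2 * n + 1 choose n)"
    using Suc_times_binomial[of n "2 * n + 1"] by simp
  also have "2 * n + 1 choose n = 2 * n + 1 choose Suc n"
    using binomial_symmetric[of n "2 * n + 1"] by simp
  also have "Suc (2 * n + 1) * (2 * n + 1 choose Suc n) = 2 * (Suc n * (Suc (2 * n) choose Suc n))"
    by simp
  also have "Suc n * (Suc (2 * n) choose Suc n) = (2 * n + 1) * (2 * n choose n)"
    using Suc_times_binomial[of n "2 * n"] by simp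
  finally show ?thesis by simp
qed

lemma Wfps_deriv: "(1 - 4 * fps_X) * fps_deriv Wfps = 2 * Wfps"
proof (rule fps_ext)
  fix n
  have "real (Suc n) * Wfps $ Suc n = (4 * real n + 2) * Wfps $ n"
    using arg_cong[OF central_binomial_Suc[of n], of real]
    by (simp add: Wfps_def algebra_simps del: binomial_Suc_Suc mult_Suc_right)
  then show "((1 - 4 * fps_X) * fps_deriv Wfps) $ n = (2 * Wfps) $ n"
    by (simp add: algebra_simps fps_numeral_fps_const)
qed

text \<open>\<open>W\<close> and \<open>1/\<surd>(1-4x)\<close> both solve \<open>(1 - 4x) y' = 2y\<close> with \<open>y(0) = 1\<close>.\<close>
lemma Wfps_times_sqrt: "Wfps * fps_sqrt (1 - 4 * fps_X) = 1"
proof -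
  define T where "T = fps_sqrt (1 - 4 * fps_X :: real fps)"
  have T2: "T ^ 2 = 1 - 4 * fps_X" and T0: "T $ 0 = 1"
    by (simp_all add: T_def fps_sqrt_power2 fps_sqrt_nth_0)
  have "2 * (T * fps_deriv T) = 2 * (-2)"
    using arg_cong[OF T2, of fps_deriv]
    by (simp add: power2_eq_square fps_numeral_fps_const algebra_simps)
  then have dT: "T * fps_deriv T = -2" by (subst (asm) mult_left_cancel) simp_all
  have "(1 - 4 * fps_X) * fps_deriv (Wfps * T)
      = ((1 - 4 * fps_X) * fps_deriv Wfps) * T + Wfps * (T ^ 2 * fps_deriv T)"
    by (simp add: T2 algebra_simps)
  also have "\<dots> = 0" using Wfps_deriv dT by algebra
  finally have "fps_deriv (Wfps * T) = 0"
    by (auto dest: arg_cong[of _ _ "\<lambda>f. f $ 0"])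
  then have "Wfps * T = fps_const ((Wfps * T) $ 0)" by (simp only: fps_deriv_eq_0_iff)
  also have "(Wfps * T) $ 0 = 1" by (simp add: T0 Wfps_def)
  finally show ?thesis by (simp add: T_def)
qed

lemma Wfps_eq: "Wfps = 1 / (1 - 2 * fps_X * Cfps)"
proof -
  have "inverse (fps_sqrt (1 - 4 * fps_X)) = Wfps"
    by (rule fps_inverse_unique) (subst mult.commute, rule Wfps_times_sqrt)
  then show ?thesis by (simp add: Cfps_root fps_divide_unit fps_sqrt_nth_0)
qed

lemma X_minus_X2_compose_XCfps: "(fps_X - fps_X ^ 2) oo (fps_X * Cfps) = fps_X"
proof -
  have "(fps_X - fps_X ^ 2) oo (fps_X * Cfps) = fps_X * Cfps - (fps_X * Cfps) ^ 2"
    by (simp add: fps_compose_sub_distrib fps_compose_power[symmetric])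
  also have "\<dots> = fps_X" using Cfps_eq by algebra
  finally show ?thesis .
qed

lemma Dmat_conj_minv_riordan_X_1_plus_X:
  fixes g :: "real fps"
  assumes "g $ 0 \<noteq> 0"
  shows "mmult (mmult Dmat (minv (riordan g (fps_X * (1 + fps_X))))) Dmat
           = riordan (inverse ((g oo -fps_X) oo (fps_X * Cfps))) (fps_X * Cfps)"
proof (rule Dmat_conj_minv_riordan)
  have "- ((fps_X * (1 + fps_X)) oo -fps_X) = (fps_X - fps_X ^ 2 :: real fps)"
    by (simp add: fps_compose_mult_distrib fps_compose_add_distrib algebra_simps power2_eq_square)
  then show "- ((fps_X * (1 + fps_X)) oo -fps_X) oo (fps_X * Cfps) = fps_X"
    by (simp only: X_minus_X2_compose_XCfps)
qed (simp_all add: assms fps_mult_nth)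

lemma Dmat_conj_minv_FS: "mmult (mmult Dmat (minv FS)) Dmat = riordan 1 (fps_X * Cfps)"
  unfolding FS_def by (simp add: Dmat_conj_minv_riordan_X_1_plus_X)

lemma Dmat_conj_minv_LS:
  "mmult (mmult Dmat (minv LS)) Dmat = riordan (1 / (1 - 2 * fps_X * Cfps)) (fps_X * Cfps)"
proof -
  have "((1 + 2 * fps_X) oo -fps_X) oo (fps_X * Cfps) = 1 - 2 * fps_X * Cfps"
    by (simp add: fps_compose_add_distrib fps_compose_sub_distrib fps_compose_mult_distrib
        fps_compose_uminus mult.assoc)
  then show ?thesis
    unfolding LS_def by (simp add: Dmat_conj_minv_riordan_X_1_plus_X fps_divide_unit)
qed

lemma Motzkin_equation_unique:
  fixes p y z :: "'a :: idom fps"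
  assumes "p $ 0 = 0" and "y = 1 + p * y + p ^ 2 * y ^ 2" and "z = 1 + p * z + p ^ 2 * z ^ 2"
  shows "y = z"
proof -
  have "(y - z) * (1 - p - p ^ 2 * (y + z)) = 0" using assms(2,3) by algebra
  moreover have "(1 - p - p ^ 2 * (y + z)) $ 0 \<noteq> 0"
    using assms(1) by (simp add: power2_eq_square)
  ultimately show ?thesis by (auto simp del: fps_sub_nth)
qed

lemma mmult_Pascal_riordan:
  defines "G \<equiv> (Mfps - fps_X * Mfps - fps_X^2 * Mfps^2) / (1 + fps_X)"
      and "H \<equiv> (fps_X + fps_X^2 * Mfps) / (1 + fps_X)"
  shows "mmult Pascal (riordan G H) = riordan 1 (fps_X * Cfps)"
proof -
  define E where "E = inverse (1 - fps_X :: real fps)"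
  define p where "p = fps_X * E"
  have E: "E * (1 - fps_X) = 1" unfolding E_def by (rule inverse_mult_eq_1) simp
  have p0: "p $ 0 = 0" by (simp add: p_def)
  have Pascal: "Pascal = riordan E p" by (simp add: Pascal_def E_def p_def fps_divide_unit)
  define m where "m = Mfps oo p"
  have m: "m = 1 + p * m + p ^ 2 * m ^ 2"
    using arg_cong[OF Mfps_eq, of "\<lambda>a. a oo p"]
    by (simp add: m_def fps_compose_add_distrib fps_compose_mult_distrib[OF p0]
        fps_compose_power[OF p0, symmetric] p0)
  moreover have "(1 - fps_X) * Cfps ^ 2
      = 1 + p * ((1 - fps_X) * Cfps ^ 2) + p ^ 2 * ((1 - fps_X) * Cfps ^ 2) ^ 2"
    unfolding p_def using Cfps_eq E by algebra
  ultimately have mC: "m = (1 - fps_X) * Cfps ^ 2" by (rule Motzkin_equation_unique[OF p0])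
  have "inverse (1 + fps_X) oo p = 1 - fps_X"
  proof -
    have "inverse (1 + fps_X) oo p = inverse (1 + p)"
      using p0 by (simp add: fps_inverse_compose fps_compose_add_distrib)
    also have "inverse (1 + p) = 1 - fps_X"
      by (rule fps_inverse_unique) (unfold p_def, use E in algebra)
    finally show ?thesis .
  qed
  then have "G oo p = (m - p * m - p ^ 2 * m ^ 2) * (1 - fps_X)"
       and "H oo p = (p + p ^ 2 * m) * (1 - fps_X)"
    by (simp_all add: G_def H_def fps_divide_unit m_def fps_compose_add_distrib
        fps_compose_sub_distrib fps_compose_mult_distrib[OF p0]
        fps_compose_power[OF p0, symmetric] p0)
  moreover have "(m - p * m - p ^ 2 * m ^ 2) * (1 - fps_X) = 1 - fps_X" using m by algebra
  moreover have "(p + p ^ 2 * m) * (1 - fps_X) = fps_X * Cfps"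
    unfolding mC p_def using Cfps_eq E by algebra
  ultimately show ?thesis using E by (simp add: Pascal mmult_riordan[OF p0])
qed

theorem lemma3p1:
  defines "G \<equiv> (Mfps - fps_X * Mfps - fps_X^2 * Mfps^2) / (1 + fps_X)"
      and "H \<equiv> (fps_X + fps_X^2 * Mfps) / (1 + fps_X)"
  shows
   "(mmult (mmult Dmat (minv FS)) Dmat = riordan 1 (fps_X * Cfps) \<and>
    riordan 1 (fps_X * Cfps) = mmult Pascal (riordan G H)) \<and>
   (mmult (mmult Dmat (minv LS)) Dmat = riordan (1 / (1 - 2 * fps_X * Cfps)) (fps_X * Cfps) \<and>
    riordan (1 / (1 - 2 * fps_X * Cfps)) (fps_X * Cfps)
      = mmult (riordan Wfps fps_X) (mmult Pascal (riordan G H))) \<and>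
   (mmult (mmult Dmat (minv LS)) Dmat
      = mmult (riordan (1 / (1 - 2 * fps_X * Cfps)) fps_X) (mmult (mmult Dmat (minv FS)) Dmat) \<and>
    mmult (riordan (1 / (1 - 2 * fps_X * Cfps)) fps_X) (mmult (mmult Dmat (minv FS)) Dmat)
      = mmult (riordan Wfps fps_X) (mmult (mmult Dmat (minv FS)) Dmat) \<and>
    mmult (riordan Wfps fps_X) (mmult (mmult Dmat (minv FS)) Dmat)
      = mmult (mmult (mmult Dmat (minv FS)) Dmat) (riordan (1 / (1 - 2 * fps_X)) fps_X))"
proof -
  have Pascal: "mmult Pascal (riordan G H) = riordan 1 (fps_X * Cfps)"
    unfolding G_def H_def by (rule mmult_Pascal_riordan)
  have X0: "(fps_X :: real fps) $ 0 = 0" and XC0: "(fps_X * Cfps) $ 0 = 0" by simp_all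
  have "(1 / (1 - 2 * fps_X)) oo (fps_X * Cfps) = Wfps"
    by (simp add: fps_compose_divide_unit[OF _ XC0] fps_compose_sub_distrib
        fps_compose_mult_distrib[OF XC0] mult.assoc Wfps_eq)
  then have "mmult (riordan 1 (fps_X * Cfps)) (riordan (1 / (1 - 2 * fps_X)) fps_X)
      = riordan Wfps (fps_X * Cfps)"
    by (simp add: mmult_riordan[OF XC0] XC0)
  moreover have "mmult (riordan a fps_X) (riordan 1 (fps_X * Cfps)) = riordan a (fps_X * Cfps)" for a
    by (simp add: mmult_riordan[OF X0])
  ultimately show ?thesis
    by (simp add: Dmat_conj_minv_FS Dmat_conj_minv_LS Pascal Wfps_eq[symmetric])
qed

end
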